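(* Let $K$ be either $\mathbb{Q}$ or a quadratic field $\mathbb{Q}[\sqrt{d}]$ with $d\ne 1$ square-free, let $\mathfrak{o}_K$ be its ring of integers and $C_2=\langle g\rangle$. Then the unit group $\mathcal{U}(\mathfrak{o}_K[C_2])$ is trivial (i.e. consists only of the trivial units $ug$, $u\in\mathcal{U}(\mathfrak{o}_K)$, $g\in C_2$) if and only if $K=\mathbb{Q}$ or $K$ is imaginary quadratic, i.e. $d<0$.
   Context: A unit of the group ring $\mathfrak{o}_K[G]$ is called trivial if it is of the form $ug$ with $u\in\mathcal{U}(\mathfrak{o}_K)$ and $g\in G$. *)

theory Defs
  imports Complex_Main "HOL-Computational_Algebra.Polynomial" "HOL-Computational_Algebra.Squarefree"
begin

text \<open>The field K = Q(sqrt d), realised as a subfield of the complex numbers.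
  For d = 1 this is Q itself.\<close>
definition quad_field :: "int \<Rightarrow> complex set" where
  "quad_field d = {of_rat a + of_rat b * csqrt (of_int d) | a b. True}"

definition algebraic_integer :: "complex \<Rightarrow> bool" where
  "algebraic_integer z \<longleftrightarrow>
     (\<exists>p :: int poly. lead_coeff p = 1 \<and> poly (map_poly of_int p) z = 0)"

definition ring_of_integers :: "int \<Rightarrow> complex set" where
  "ring_of_integers d = {z \<in> quad_field d. algebraic_integer z}"

definition oK_units :: "int \<Rightarrow> complex set" where
  "oK_units d = {u \<in> ring_of_integers d. \<exists>v \<in> ring_of_integers d. u * v = 1}"

text \<open>The group ring o_K[C_2], C_2 = <g>: the element x + y g is represented by
  the pair (x, y) with x, y in o_K; multiplication uses g^2 = 1.\<close>
definition c2_mult :: "complex \<times> complex \<Rightarrow> complex \<times> complex \<Rightarrow> complex \<times> complex" where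
  "c2_mult p q = (fst p * fst q + snd p * snd q, fst p * snd q + snd p * fst q)"

definition group_ring_C2 :: "int \<Rightarrow> (complex \<times> complex) set" where
  "group_ring_C2 d = ring_of_integers d \<times> ring_of_integers d"

text \<open>The unit group U(o_K[C_2]) (the ring is commutative, identity is (1,0) = 1*e).\<close>
definition group_ring_C2_units :: "int \<Rightarrow> (complex \<times> complex) set" where
  "group_ring_C2_units d =
     {a \<in> group_ring_C2 d. \<exists>b \<in> group_ring_C2 d. c2_mult a b = (1, 0)}"

text \<open>Trivial units u*h with u in U(o_K), h in C_2 = {1, g}:
  u*1 = (u,0) and u*g = (0,u).\<close>
definition trivial_units_C2 :: "int \<Rightarrow> (complex \<times> complex) set" where
  "trivial_units_C2 d = {(u, 0) | u. u \<in> oK_units d} \<union> {(0, u) | u. u \<in> oK_units d}"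

end

theory Submission
  imports Defs "HOL-Analysis.Kronecker_Approximation_Theorem"
begin

text \<open>Write a unit of \<open>\<o>\<^sub>K[C\<^sub>2]\<close> as \<open>x + y g\<close> with inverse \<open>x' + y' g\<close>. Applying the two characters
  \<open>g \<mapsto> \<plusminus>1\<close> shows that \<open>x + y\<close> and \<open>x - y\<close> are units of \<open>\<o>\<^sub>K\<close>. If \<open>K = \<rat>\<close> or \<open>K\<close> is imaginary
  quadratic, then \<open>\<o>\<^sub>K = {(A + B\<surd>d)/2 | 4 dvd A\<^sup>2 - dB\<^sup>2}\<close> (by Gauss's lemma applied to the
  conjugates \<open>z, cnj z\<close>), so \<open>|z|\<^sup>2\<close> is a non-negative integer on \<open>\<o>\<^sub>K\<close>; units therefore have absolute
  value 1 and the parallelogram law gives \<open>|x|\<^sup>2 + |y|\<^sup>2 = 1\<close>, forcing \<open>x = 0\<close> or \<open>y = 0\<close>.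
  If \<open>d > 1\<close>, a solution of Pell's equation \<open>a\<^sup>2 - d b\<^sup>2 = 1\<close> with \<open>b \<noteq> 0\<close>, obtained from Dirichlet's
  approximation theorem, yields the non-trivial unit \<open>a + b\<surd>d g\<close> with inverse \<open>a - b\<surd>d g\<close>.\<close>

lemma map_poly_of_int_mult:
  "map_poly (of_int :: int \<Rightarrow> 'a::comm_ring_1) (p * q) = map_poly of_int p * map_poly of_int q"
  by (rule poly_eqI) (simp only: coeff_map_poly of_int_0 coeff_mult of_int_sum of_int_mult)

lemma map_poly_of_rat_mult:
  "map_poly (of_rat :: rat \<Rightarrow> 'a::field_char_0) (p * q) = map_poly of_rat p * map_poly of_rat q"
  by (rule poly_eqI) (simp only: coeff_map_poly of_rat_0 coeff_mult of_rat_sum of_rat_mult)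

lemma map_poly_of_rat_add:
  "map_poly (of_rat :: rat \<Rightarrow> 'a::field_char_0) (p + q) = map_poly of_rat p + map_poly of_rat q"
  by (rule poly_eqI) (simp add: coeff_map_poly of_rat_add)

lemma map_poly_of_rat_of_int:
  "map_poly (of_rat :: rat \<Rightarrow> 'a::field_char_0) (map_poly of_int p) = map_poly of_int p"
  by (rule poly_eqI) (simp add: coeff_map_poly)

lemma lead_coeff_map_poly_of_int:
  "lead_coeff (map_poly (of_int :: int \<Rightarrow> 'a::{comm_ring_1,ring_char_0}) p) = of_int (lead_coeff p)"
  by (cases "p = 0") (auto intro: lead_coeff_map_poly_nz)

lemma poly_map_poly_of_int_cnj:
  "poly (map_poly of_int p) (cnj z) = cnj (poly (map_poly of_int p) z)"
  by (induction p rule: pCons_induct) (simp_all add: map_poly_pCons)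

lemma rat_poly_clear_denominators:
  fixes q :: "rat poly"
  shows "\<exists>A Q. A > 0 \<and> map_poly of_int Q = smult (of_int A) q"
proof (induction q rule: pCons_induct)
  case 0
  show ?case by (rule exI[of _ 1], rule exI[of _ 0]) simp
next
  case (pCons a q)
  then obtain A Q where AQ: "A > 0" "map_poly of_int Q = smult (of_int A) q" by blast
  obtain n m where nm: "quotient_of a = (n, m)" by (cases "quotient_of a")
  have "m > 0" "a = of_int n / of_int m"
    using quotient_of_denom_pos[OF nm] quotient_of_div[OF nm] by simp_all
  with AQ have "map_poly of_int (pCons (A * n) (smult m Q)) = smult (of_int (A * m)) (pCons a q)"
    by (simp add: map_poly_pCons map_poly_smult mult.commute)
  with \<open>A > 0\<close> \<open>m > 0\<close> show ?case by (intro exI[of _ "A * m"]) auto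
qed

lemma content_eq_1_if_monic: "lead_coeff (p :: int poly) = 1 \<Longrightarrow> Polynomial.content p = 1"
  by (metis content_dvd_coeff is_unit_content_iff)

text \<open>Gauss's lemma: clearing denominators, the contents of the two integral factors
  multiply to the product of the denominators, and each content divides its denominator.\<close>
lemma monic_factor_of_monic_int_poly:
  fixes p :: "int poly" and q r :: "rat poly"
  assumes p: "lead_coeff p = 1" and pqr: "map_poly of_int p = q * r" and q: "lead_coeff q = 1"
  shows "\<exists>Q. q = map_poly of_int Q"
proof -
  have r: "lead_coeff r = 1"
    using p q lead_coeff_mult[of q r] by (simp add: lead_coeff_map_poly_of_int flip: pqr)
  obtain A Q where A: "A > 0" "map_poly of_int Q = smult (of_int A) q"
    using rat_poly_clear_denominators by blast
  obtain B R where B: "B > 0" "map_poly of_int R = smult (of_int B) r"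
    using rat_poly_clear_denominators by blast
  have "map_poly (of_int :: int \<Rightarrow> rat) (Q * R) = map_poly of_int (smult (A * B) p)"
    by (simp add: map_poly_of_int_mult map_poly_smult A(2) B(2) pqr mult_ac)
  then have "Q * R = smult (A * B) p"
    by (metis (no_types) coeff_map_poly of_int_0 of_int_eq_iff poly_eqI)
  then have contents: "Polynomial.content Q * Polynomial.content R = A * B"
    using content_mult[of Q R] content_eq_1_if_monic[OF p] A B by (simp add: abs_mult)
  have "of_int (lead_coeff Q) = (of_int A :: rat)" "of_int (lead_coeff R) = (of_int B :: rat)"
    using A B q r by (simp_all flip: lead_coeff_map_poly_of_int)
  then have "Polynomial.content Q dvd A" "Polynomial.content R dvd B"
    by (metis content_dvd_coeff of_int_eq_iff)+
  then have le: "Polynomial.content Q \<le> A" "Polynomial.content R \<le> B"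
    using A B by (simp_all add: zdvd_imp_le)
  have "Polynomial.content Q \<ge> 0" "Polynomial.content R \<ge> 0"
    by (metis normalize_content abs_ge_zero normalize_int_def)+
  with contents A B have "Polynomial.content R > 0"
    by (metis mult_eq_0_iff nless_le)
  have "Polynomial.content Q = A"
  proof (rule ccontr)
    assume "Polynomial.content Q \<noteq> A"
    with le have "Polynomial.content Q * Polynomial.content R < A * Polynomial.content R"
      using \<open>Polynomial.content R > 0\<close> by simp
    also have "\<dots> \<le> A * B"
      using le A by simp
    finally show False
      using contents by simp
  qed
  then have "map_poly of_int Q = smult (of_int A) (map_poly (of_int :: int \<Rightarrow> rat) (primitive_part Q))"
    by (metis content_times_primitive_part map_poly_smult of_int_0 of_int_mult)
  then have "smult (of_int A) q = smult (of_int A) (map_poly of_int (primitive_part Q))"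
    using A(2) by simp
  then have "q = map_poly of_int (primitive_part Q)"
    by (rule smult_cancel[rotated]) (use A in simp)
  then show ?thesis by blast
qed

lemma algebraic_integer_iff_algebraic_int: "algebraic_integer z \<longleftrightarrow> algebraic_int z"
  by (auto simp: algebraic_integer_def algebraic_int_altdef_ipoly)

lemma of_rat_in_Ints_iff: "(of_rat a :: 'a::field_char_0) \<in> \<int> \<longleftrightarrow> a \<in> \<int>"
  by (metis Ints_cases Ints_of_int of_rat_eq_iff of_rat_of_int_eq)

lemma cnj_of_rat [simp]: "cnj (of_rat a) = of_rat a"
  by (cases a) (simp add: of_rat_rat)

lemma ring_of_integers_1_subset_Ints: "ring_of_integers 1 \<subseteq> \<int>"
proof
  fix z assume z: "z \<in> ring_of_integers 1"
  then obtain a b where "z = of_rat a + of_rat b * csqrt (of_int 1)"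
    unfolding ring_of_integers_def quad_field_def by blast
  then have "z \<in> \<rat>" by simp
  with z show "z \<in> \<int>"
    by (auto simp: ring_of_integers_def algebraic_integer_iff_algebraic_int
             intro: rational_algebraic_int_is_int)
qed

lemma quadratic_dvd_of_common_roots:
  fixes P q :: "rat poly" and z w :: complex
  assumes "degree q = 2" "z \<noteq> w"
    and "poly (map_poly of_rat P) z = 0" "poly (map_poly of_rat P) w = 0"
    and "poly (map_poly of_rat q) z = 0" "poly (map_poly of_rat q) w = 0"
  shows "q dvd P"
proof -
  define r where "r = P mod q"
  have "P = q * (P div q) + r"
    by (simp add: r_def)
  then have "map_poly of_rat P = map_poly of_rat q * map_poly of_rat (P div q) + map_poly (of_rat :: rat \<Rightarrow> complex) r"
    by (metis map_poly_of_rat_add map_poly_of_rat_mult)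
  with assms(3-6) have "poly (map_poly of_rat r) x = poly 0 x" if "x \<in> {z, w}" for x
    using that by auto
  moreover have "degree r < 2"
    using degree_mod_less[of q P] assms(1) by (cases "q = 0"; cases "r = 0") (auto simp: r_def)
  then have "degree (map_poly (of_rat :: rat \<Rightarrow> complex) r) < 2"
    using map_poly_degree_leq[of "of_rat :: rat \<Rightarrow> complex" r] by linarith
  ultimately have "map_poly (of_rat :: rat \<Rightarrow> complex) r = 0"
    using assms(2) by (intro poly_eqI_degree[of "{z, w}"]) auto
  then show ?thesis
    by (simp add: r_def mod_eq_0_iff_dvd map_poly_eq_0_iff)
qed

lemma rat_quadratic_integral_if_common_roots:
  fixes p :: "int poly" and q :: "rat poly" and z w :: complex
  assumes p: "lead_coeff p = 1" and q: "lead_coeff q = 1" "degree q = 2" and "z \<noteq> w"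
    and "poly (map_poly of_int p) z = 0" "poly (map_poly of_int p) w = 0"
    and "poly (map_poly of_rat q) z = 0" "poly (map_poly of_rat q) w = 0"
  shows "\<exists>Q. q = map_poly of_int Q"
proof -
  have "q dvd map_poly of_int p"
    using assms by (intro quadratic_dvd_of_common_roots[of q z w]) (simp_all add: map_poly_of_rat_of_int)
  then obtain r where "map_poly of_int p = q * r"
    by blast
  then show ?thesis
    using monic_factor_of_monic_int_poly[OF p _ q(1)] by blast
qed

lemma poly_trace_norm_quadratic:
  fixes a b :: rat and s x :: complex
  assumes "s\<^sup>2 = of_int d" "x = of_rat a + of_rat b * s \<or> x = of_rat a - of_rat b * s"
  shows "poly (map_poly of_rat [:a\<^sup>2 - of_int d * b\<^sup>2, - 2 * a, 1:]) x = 0"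
proof -
  have "poly (map_poly of_rat [:a\<^sup>2 - of_int d * b\<^sup>2, - 2 * a, 1:]) x
      = (x - of_rat a)\<^sup>2 - of_int d * (of_rat b)\<^sup>2"
    by (simp add: map_poly_pCons of_rat_mult of_rat_diff of_rat_power of_rat_minus
                  algebra_simps power2_eq_square)
  moreover have "(x - of_rat a)\<^sup>2 = (of_rat b * s)\<^sup>2"
    using assms(2) by (metis add_diff_cancel_left' diff_add_cancel power2_minus minus_diff_eq)
  ultimately show ?thesis
    by (simp add: power_mult_distrib assms(1))
qed

lemma imag_quadratic_trace_norm_in_Ints:
  fixes a b :: rat
  assumes d: "d \<le> 0" and z: "algebraic_int (of_rat a + of_rat b * csqrt (of_int d))"
  shows "2 * a \<in> \<int> \<and> a\<^sup>2 - of_int d * b\<^sup>2 \<in> \<int>"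
proof (cases "b = 0 \<or> d = 0")
  case True
  then have "of_rat a + of_rat b * csqrt (of_int d) = (of_rat a :: complex)"
    by auto
  with z have "a \<in> \<int>"
    using rational_algebraic_int_is_int[of "of_rat a :: complex"] by (simp add: of_rat_in_Ints_iff)
  with True show ?thesis
    by auto
next
  case False
  define s where "s = csqrt (of_int d)"
  define z where "z = of_rat a + of_rat b * s"
  define q where "q = [:a\<^sup>2 - of_int d * b\<^sup>2, - 2 * a, 1:]"
  obtain p :: "int poly" where p: "lead_coeff p = 1" "poly (map_poly of_int p) z = 0"
    using z by (auto simp: z_def s_def algebraic_int_altdef_ipoly)
  have s2: "s\<^sup>2 = of_int d"
    by (simp add: s_def)
  txt \<open>\<open>cnj\<close> fixes the integer polynomial \<open>p\<close> and swaps the two roots \<open>a \<plusminus> b\<surd>d\<close> of \<open>q\<close>.\<close>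
  have cnj_z: "cnj z = of_rat a - of_rat b * s"
    using d by (simp add: z_def s_def)
  have "s \<noteq> 0"
    using False s2 by auto
  moreover have "z - cnj z = 2 * of_rat b * s"
    unfolding cnj_z by (simp add: z_def)
  ultimately have "z \<noteq> cnj z"
    using False by auto
  moreover have "poly (map_poly of_int p) (cnj z) = 0"
    using p(2) by (simp add: poly_map_poly_of_int_cnj)
  moreover have "poly (map_poly of_rat q) z = 0"
    unfolding q_def by (rule poly_trace_norm_quadratic[OF s2]) (simp add: z_def)
  moreover have "poly (map_poly of_rat q) (cnj z) = 0"
    unfolding q_def cnj_z by (rule poly_trace_norm_quadratic[OF s2]) simp
  moreover have "lead_coeff q = 1" "degree q = 2"
    by (simp_all add: q_def)
  ultimately obtain Q where "q = map_poly of_int Q"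
    using rat_quadratic_integral_if_common_roots[OF p(1), of q z "cnj z"] p(2) by blast
  then have "coeff q 0 \<in> \<int>" "coeff q 1 \<in> \<int>"
    by (simp_all add: coeff_map_poly)
  then show ?thesis
    by (simp add: q_def)
qed

lemma squarefree_times_square_in_Ints:
  fixes b :: rat
  assumes "squarefree d" "of_int d * b\<^sup>2 \<in> \<int>"
  shows "b \<in> \<int>"
proof -
  obtain n m where nm: "quotient_of b = (n, m)"
    by (cases "quotient_of b")
  have m: "m > 0" and b: "b = of_int n / of_int m" and "coprime n m"
    using quotient_of_denom_pos[OF nm] quotient_of_div[OF nm] quotient_of_coprime[OF nm] by simp_all
  obtain k where "of_int d * b\<^sup>2 = of_int k"
    using assms(2) by (auto elim: Ints_cases)
  with m have "of_int (d * n\<^sup>2) = (of_int (k * m\<^sup>2) :: rat)"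
    by (simp add: b field_simps power2_eq_square)
  then have "m\<^sup>2 dvd d * n\<^sup>2"
    by (metis dvd_triv_right of_int_eq_iff)
  moreover have "coprime (m\<^sup>2) (n\<^sup>2)"
    using \<open>coprime n m\<close> by (simp add: coprime_commute)
  ultimately have "m\<^sup>2 dvd d"
    using coprime_dvd_mult_left_iff by blast
  then have "m = 1"
    using squarefreeD[OF assms(1)] m by fastforce
  then show ?thesis
    by (simp add: b)
qed

definition quadratic_integers :: "int \<Rightarrow> complex set" where
  "quadratic_integers d =
     {(of_int A + of_int B * csqrt (of_int d)) / 2 | A B. 4 dvd A\<^sup>2 - d * B\<^sup>2}"

lemma ring_of_integers_subset_quadratic_integers:
  assumes "d \<le> 0" "squarefree d"
  shows "ring_of_integers d \<subseteq> quadratic_integers d"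
proof
  fix z assume z: "z \<in> ring_of_integers d"
  then obtain a b where zab: "z = of_rat a + of_rat b * csqrt (of_int d)"
    by (auto simp: ring_of_integers_def quad_field_def)
  with z have "algebraic_int (of_rat a + of_rat b * csqrt (of_int d))"
    by (simp add: ring_of_integers_def algebraic_integer_iff_algebraic_int)
  from imag_quadratic_trace_norm_in_Ints[OF assms(1) this]
  obtain A N where A: "2 * a = of_int A" and N: "a\<^sup>2 - of_int d * b\<^sup>2 = of_int N"
    by (auto elim!: Ints_cases)
  have "of_int d * (2 * b)\<^sup>2 = (of_int (A\<^sup>2 - 4 * N) :: rat)"
    by (simp flip: A N add: algebra_simps power2_eq_square)
  then obtain B where B: "2 * b = of_int B"
    using squarefree_times_square_in_Ints[OF assms(2), of "2 * b"] by (auto elim!: Ints_cases)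
  have "of_int (A\<^sup>2 - d * B\<^sup>2) = (of_int (4 * N) :: rat)"
    by (simp flip: A B N add: algebra_simps power2_eq_square)
  then have "4 dvd A\<^sup>2 - d * B\<^sup>2"
    by (simp only: of_int_eq_iff) simp
  moreover have "z = (of_int A + of_int B * csqrt (of_int d)) / 2"
    using arg_cong[OF A, of "of_rat :: rat \<Rightarrow> complex"] arg_cong[OF B, of "of_rat :: rat \<Rightarrow> complex"]
    by (simp add: zab of_rat_mult field_simps)
  ultimately show "z \<in> quadratic_integers d"
    by (auto simp: quadratic_integers_def)
qed

lemma quadratic_integers_uminus:
  assumes "z \<in> quadratic_integers d"
  shows "- z \<in> quadratic_integers d"
proof -
  obtain A B where "z = (of_int A + of_int B * csqrt (of_int d)) / 2" "4 dvd A\<^sup>2 - d * B\<^sup>2"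
    using assms by (auto simp: quadratic_integers_def)
  then have "- z = (of_int (- A) + of_int (- B) * csqrt (of_int d)) / 2"
    "4 dvd (- A)\<^sup>2 - d * (- B)\<^sup>2"
    by (simp_all add: field_simps)
  then show ?thesis
    unfolding quadratic_integers_def by blast
qed

text \<open>The cross term \<open>A\<^sub>1 A\<^sub>2 - d B\<^sub>1 B\<^sub>2\<close> is even: for even \<open>d\<close> both \<open>A\<^sub>i\<close> are even,
  for odd \<open>d\<close> each \<open>A\<^sub>i\<close> has the parity of \<open>B\<^sub>i\<close>.\<close>
lemma four_dvd_norm_form_add:
  fixes d A1 B1 A2 B2 :: int
  assumes "4 dvd A1\<^sup>2 - d * B1\<^sup>2" "4 dvd A2\<^sup>2 - d * B2\<^sup>2"
  shows "4 dvd (A1 + A2)\<^sup>2 - d * (B1 + B2)\<^sup>2"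
proof -
  have even_norms: "even (A1\<^sup>2 - d * B1\<^sup>2)" "even (A2\<^sup>2 - d * B2\<^sup>2)"
    using assms by (meson dvd_trans even_numeral)+
  have "even (A1 * A2 - d * B1 * B2)"
  proof (cases "even d")
    case True
    with even_norms have "even A1" "even A2"
      by auto
    with True show ?thesis
      by auto
  next
    case False
    with even_norms have "even A1 \<longleftrightarrow> even B1" "even A2 \<longleftrightarrow> even B2"
      by auto
    with False show ?thesis
      by auto
  qed
  then obtain c where "A1 * A2 - d * B1 * B2 = 2 * c"
    by blast
  then have "(A1 + A2)\<^sup>2 - d * (B1 + B2)\<^sup>2 = (A1\<^sup>2 - d * B1\<^sup>2) + (A2\<^sup>2 - d * B2\<^sup>2) + 4 * c"
    by (simp add: algebra_simps power2_eq_square)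
  with assms show ?thesis
    by simp
qed

lemma quadratic_integers_add:
  assumes "x \<in> quadratic_integers d" "y \<in> quadratic_integers d"
  shows "x + y \<in> quadratic_integers d"
proof -
  obtain A1 B1 A2 B2 where
    "x = (of_int A1 + of_int B1 * csqrt (of_int d)) / 2" "4 dvd A1\<^sup>2 - d * B1\<^sup>2"
    "y = (of_int A2 + of_int B2 * csqrt (of_int d)) / 2" "4 dvd A2\<^sup>2 - d * B2\<^sup>2"
    using assms by (auto simp: quadratic_integers_def)
  then have "x + y = (of_int (A1 + A2) + of_int (B1 + B2) * csqrt (of_int d)) / 2"
    "4 dvd (A1 + A2)\<^sup>2 - d * (B1 + B2)\<^sup>2"
    by (simp_all add: field_simps four_dvd_norm_form_add)
  then show ?thesis
    unfolding quadratic_integers_def by blast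
qed

lemma quadratic_integers_diff:
  "x \<in> quadratic_integers d \<Longrightarrow> y \<in> quadratic_integers d \<Longrightarrow> x - y \<in> quadratic_integers d"
  using quadratic_integers_add[of x d "- y"] quadratic_integers_uminus[of y d] by simp

lemma quadratic_integers_norm_sq_in_Ints:
  assumes "d \<le> 0" "z \<in> quadratic_integers d"
  shows "(cmod z)\<^sup>2 \<in> \<int>"
proof -
  obtain A B where z: "z = (of_int A + of_int B * csqrt (of_int d)) / 2"
    and "4 dvd A\<^sup>2 - d * B\<^sup>2"
    using assms(2) by (auto simp: quadratic_integers_def)
  then obtain N where N: "A\<^sup>2 - d * B\<^sup>2 = 4 * N"
    by (elim dvdE)
  have Re_Im: "Re z = of_int A / 2" "Im z = of_int B * sqrt (- of_int d) / 2"
    using assms(1) by (simp_all add: z)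
  have "(cmod z)\<^sup>2 = (of_int A / 2)\<^sup>2 + (of_int B * sqrt (- of_int d) / 2)\<^sup>2"
    by (simp only: cmod_power2 Re_Im)
  also have "\<dots> = of_int (A\<^sup>2 - d * B\<^sup>2) / 4"
    using assms(1) by (simp add: power_divide power_mult_distrib)
  finally show ?thesis
    by (simp add: N)
qed

lemma quadratic_integers_subset_ring_of_integers: "quadratic_integers d \<subseteq> ring_of_integers d"
proof
  fix z assume "z \<in> quadratic_integers d"
  then obtain A B where z: "z = (of_int A + of_int B * csqrt (of_int d)) / 2"
    and "4 dvd A\<^sup>2 - d * B\<^sup>2"
    by (auto simp: quadratic_integers_def)
  then obtain N where N: "A\<^sup>2 - d * B\<^sup>2 = 4 * N"
    by (elim dvdE)
  have "z = of_rat (of_int A / 2) + of_rat (of_int B / 2) * csqrt (of_int d)"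
    by (simp add: z of_rat_divide field_simps)
  then have "z \<in> quad_field d"
    unfolding quad_field_def by blast
  have "poly (map_poly of_int [:N, - A, 1:]) z = (of_int (4 * N - A\<^sup>2) + of_int B ^ 2 * (csqrt (of_int d))\<^sup>2) / 4"
    by (simp add: z map_poly_pCons field_simps power2_eq_square)
  also have "\<dots> = 0"
    by (simp flip: N)
  finally have "algebraic_integer z"
    unfolding algebraic_integer_def by (intro exI[of _ "[:N, - A, 1:]"]) simp
  with \<open>z \<in> quad_field d\<close> show "z \<in> ring_of_integers d"
    by (simp add: ring_of_integers_def)
qed

lemma of_int_in_ring_of_integers: "of_int n \<in> ring_of_integers d"
proof -
  have "of_int n = (of_int (2 * n) + of_int 0 * csqrt (of_int d)) / (2 :: complex)"
    by simp
  moreover have "4 dvd (2 * n)\<^sup>2 - d * 0\<^sup>2"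
    by (simp add: power_mult_distrib)
  ultimately have "of_int n \<in> quadratic_integers d"
    unfolding quadratic_integers_def by blast
  then show ?thesis
    using quadratic_integers_subset_ring_of_integers by blast
qed

lemma of_int_mult_csqrt_in_ring_of_integers: "of_int c * csqrt (of_int d) \<in> ring_of_integers d"
proof -
  have "of_int c * csqrt (of_int d) = (of_int 0 + of_int (2 * c) * csqrt (of_int d)) / 2"
    by simp
  moreover have "4 dvd 0\<^sup>2 - d * (2 * c)\<^sup>2"
    by (simp add: power_mult_distrib)
  ultimately have "of_int c * csqrt (of_int d) \<in> quadratic_integers d"
    unfolding quadratic_integers_def by blast
  then show ?thesis
    using quadratic_integers_subset_ring_of_integers by blast
qed

lemma trivial_units_C2_subset_units: "trivial_units_C2 d \<subseteq> group_ring_C2_units d"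
proof
  fix a assume "a \<in> trivial_units_C2 d"
  then obtain u v where "a = (u, 0) \<or> a = (0, u)" "u \<in> ring_of_integers d" "v \<in> ring_of_integers d" "u * v = 1"
    by (auto simp: trivial_units_C2_def oK_units_def)
  moreover have "0 \<in> ring_of_integers d"
    using of_int_in_ring_of_integers[of 0] by simp
  ultimately have "a \<in> group_ring_C2 d \<and> (c2_mult a (v, 0) = (1, 0) \<or> c2_mult a (0, v) = (1, 0))"
    "(v, 0) \<in> group_ring_C2 d" "(0, v) \<in> group_ring_C2 d"
    by (auto simp: group_ring_C2_def c2_mult_def)
  then show "a \<in> group_ring_C2_units d"
    unfolding group_ring_C2_units_def by blast
qed

lemma cmod_sq_eq_1_if_unit:
  fixes u v :: complex
  assumes "u * v = 1" "(cmod u)\<^sup>2 \<in> \<int>" "(cmod v)\<^sup>2 \<in> \<int>"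
  shows "(cmod u)\<^sup>2 = 1"
proof -
  obtain m n where m: "(cmod u)\<^sup>2 = of_int m" and n: "(cmod v)\<^sup>2 = of_int n"
    using assms(2,3) by (auto elim!: Ints_cases)
  have "(cmod u)\<^sup>2 * (cmod v)\<^sup>2 = 1"
    using arg_cong[OF assms(1), of "\<lambda>z. (cmod z)\<^sup>2"] by (simp add: norm_mult power_mult_distrib)
  then have "m * n = 1"
    by (simp add: m n flip: of_int_mult)
  moreover have "m \<ge> 0"
    using m by (metis of_int_0_le_iff zero_le_power2)
  ultimately show ?thesis
    by (simp add: m zmult_eq_1_iff)
qed

lemma group_ring_C2_units_subset_trivial:
  assumes "ring_of_integers d \<subseteq> S"
    and add: "\<And>x y. x \<in> S \<Longrightarrow> y \<in> S \<Longrightarrow> x + y \<in> S"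
    and diff: "\<And>x y. x \<in> S \<Longrightarrow> y \<in> S \<Longrightarrow> x - y \<in> S"
    and norm: "\<And>z. z \<in> S \<Longrightarrow> (cmod z)\<^sup>2 \<in> \<int>"
  shows "group_ring_C2_units d \<subseteq> trivial_units_C2 d"
proof
  fix a assume "a \<in> group_ring_C2_units d"
  then obtain x y x' y' where a: "a = (x, y)"
    and O: "x \<in> ring_of_integers d" "y \<in> ring_of_integers d"
      "x' \<in> ring_of_integers d" "y' \<in> ring_of_integers d"
    and inv: "x * x' + y * y' = 1" "x * y' + y * x' = 0"
    by (auto simp: group_ring_C2_units_def group_ring_C2_def c2_mult_def)
  have S: "x \<in> S" "y \<in> S" "x' \<in> S" "y' \<in> S"
    using O assms(1) by auto
  have "(x + y) * (x' + y') = (x * x' + y * y') + (x * y' + y * x')"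
    "(x - y) * (x' - y') = (x * x' + y * y') - (x * y' + y * x')"
    by (simp_all add: algebra_simps)
  then have "(cmod (x + y))\<^sup>2 = 1" "(cmod (x - y))\<^sup>2 = 1"
    using inv S by (auto intro!: cmod_sq_eq_1_if_unit add diff norm)
  moreover have "(cmod (x + y))\<^sup>2 + (cmod (x - y))\<^sup>2 = 2 * ((cmod x)\<^sup>2 + (cmod y)\<^sup>2)"
    unfolding cmod_power2 by (simp add: power2_eq_square algebra_simps)
  moreover obtain m n where "(cmod x)\<^sup>2 = of_int m" "(cmod y)\<^sup>2 = of_int n"
    using norm S by (meson Ints_cases)
  ultimately have "m + n = 1" "m \<ge> 0" "n \<ge> 0"
    by (simp_all, metis of_int_0_le_iff zero_le_power2)+
  then have "(cmod x)\<^sup>2 = 0 \<or> (cmod y)\<^sup>2 = 0"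
    using \<open>(cmod x)\<^sup>2 = of_int m\<close> \<open>(cmod y)\<^sup>2 = of_int n\<close> by auto
  then have "x = 0 \<or> y = 0"
    by simp
  then show "a \<in> trivial_units_C2 d"
    using O inv by (auto simp: a trivial_units_C2_def oK_units_def)
qed

lemma sqrt_of_int_not_rational:
  assumes "d \<ge> 0" "\<And>k. k\<^sup>2 \<noteq> d"
  shows "sqrt (of_int d) \<notin> \<rat>"
proof
  assume "sqrt (of_int d) \<in> \<rat>"
  then have "sqrt (of_int d) \<in> \<int>"
    by (intro rational_algebraic_int_is_int) auto
  then obtain k where "sqrt (of_int d) = of_int k"
    by (elim Ints_cases)
  then have "of_int (k\<^sup>2) = (of_int d :: real)"
    using assms(1) by (metis of_int_0_le_iff of_int_power real_sqrt_pow2)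
  with assms(2) show False
    by (simp only: of_int_eq_iff)
qed

text \<open>A good approximation \<open>h/k\<close> of \<open>\<surd>d\<close> has \<open>\<bar>h - k\<surd>d\<bar> < 1/k\<close> and \<open>\<bar>h + k\<surd>d\<bar> \<le> 1 + 2k\<surd>d\<close>,
  so its norm \<open>h\<^sup>2 - d k\<^sup>2\<close> is bounded independently of \<open>k\<close>.\<close>
lemma norm_form_bound_of_good_approx:
  fixes d h k :: int
  assumes d: "d \<ge> 0" and k: "k > 0"
    and approx: "\<bar>sqrt (of_int d) - of_int h / of_int k\<bar> < 1 / (of_int k)\<^sup>2"
  shows "\<bar>h\<^sup>2 - d * k\<^sup>2\<bar> \<le> \<lceil>1 + 2 * sqrt (of_int d)\<rceil>"
proof -
  define t where "t = sqrt (of_int d)"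
  have t: "t \<ge> 0" "t * t = of_int d"
    using d by (simp_all add: t_def)
  have "\<bar>of_int h - of_int k * t\<bar> = of_int k * \<bar>t - of_int h / of_int k\<bar>"
    using k by (simp add: field_simps abs_mult[symmetric] abs_minus_commute)
  also have "\<dots> < of_int k * (1 / (of_int k)\<^sup>2)"
    using approx k by (intro mult_strict_left_mono) (simp_all add: t_def)
  also have "\<dots> = 1 / of_int k"
    using k by (simp add: power2_eq_square)
  finally have minus: "\<bar>of_int h - of_int k * t\<bar> < 1 / of_int k" .
  have "\<bar>of_int h + of_int k * t\<bar> \<le> \<bar>of_int h - of_int k * t\<bar> + 2 * of_int k * t"
    using abs_triangle_ineq[of "of_int h - of_int k * t" "2 * of_int k * t"] t k
    by (simp add: algebra_simps)
  moreover have "1 / (of_int k :: real) \<le> 1"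
    using k by simp
  ultimately have plus: "\<bar>of_int h + of_int k * t\<bar> \<le> 1 + 2 * of_int k * t"
    using minus by linarith
  have "(of_int \<bar>h\<^sup>2 - d * k\<^sup>2\<bar> :: real) = \<bar>of_int h - of_int k * t\<bar> * \<bar>of_int h + of_int k * t\<bar>"
    by (simp add: t(2)[symmetric] abs_mult[symmetric] algebra_simps power2_eq_square)
  also have "\<dots> \<le> (1 / of_int k) * (1 + 2 * of_int k * t)"
    using minus plus k by (intro mult_mono) auto
  also have "\<dots> \<le> 1 + 2 * t"
    using k t by (simp add: field_simps)
  finally show ?thesis
    unfolding t_def by linarith
qed

lemma brahmagupta_identity:
  fixes d h1 h2 k1 k2 :: "'a::comm_ring_1"
  shows "(h1 * h2 - d * k1 * k2)\<^sup>2 - d * (h1 * k2 - h2 * k1)\<^sup>2 = (h1\<^sup>2 - d * k1\<^sup>2) * (h2\<^sup>2 - d * k2\<^sup>2)"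
  by (simp add: algebra_simps power2_eq_square)

text \<open>If \<open>h\<^sub>1 \<equiv> h\<^sub>2\<close> and \<open>k\<^sub>1 \<equiv> k\<^sub>2\<close> modulo the common norm \<open>n\<close>, then \<open>(h\<^sub>1 + k\<^sub>1\<surd>d)(h\<^sub>2 - k\<^sub>2\<surd>d)/n\<close>
  has integral coordinates and norm 1.\<close>
lemma pell_solution_of_congruent_pair:
  fixes d h1 k1 h2 k2 n :: int
  assumes norms: "h1\<^sup>2 - d * k1\<^sup>2 = n" "h2\<^sup>2 - d * k2\<^sup>2 = n" and "n \<noteq> 0"
    and cong: "h1 mod n = h2 mod n" "k1 mod n = k2 mod n"
    and pos: "k1 > 0" "k2 > 0" and "(h1, k1) \<noteq> (h2, k2)"
  shows "\<exists>x y. y \<noteq> 0 \<and> x\<^sup>2 - d * y\<^sup>2 = 1"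
proof -
  have "n dvd h2 - h1" "n dvd k2 - k1"
    using cong[symmetric] by (simp_all add: mod_eq_dvd_iff)
  then obtain t u where t: "h2 = h1 + n * t" and u: "k2 = k1 + n * u"
    by (metis dvdE diff_add_cancel add.commute)
  define x where "x = 1 + h1 * t - d * k1 * u"
  define y where "y = h1 * u - t * k1"
  have X: "h1 * h2 - d * k1 * k2 = n * x"
    using norms(1) by (simp add: x_def t u algebra_simps power2_eq_square)
  have Y: "h1 * k2 - h2 * k1 = n * y"
    by (simp add: y_def t u algebra_simps)
  have "(n * x)\<^sup>2 - d * (n * y)\<^sup>2 = n * n"
    using brahmagupta_identity[of h1 h2 d k1 k2] unfolding X Y norms .
  then have "n\<^sup>2 * (x\<^sup>2 - d * y\<^sup>2) = n\<^sup>2 * 1"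
    by (simp add: algebra_simps power2_eq_square)
  then have "x\<^sup>2 - d * y\<^sup>2 = 1"
    using \<open>n \<noteq> 0\<close> by simp
  moreover have "y \<noteq> 0"
  proof
    assume "y = 0"
    then have hk: "h1 * k2 = h2 * k1"
      using Y by simp
    have "k2\<^sup>2 * n = (h1 * k2)\<^sup>2 - d * k1\<^sup>2 * k2\<^sup>2"
      by (simp flip: norms(1) add: algebra_simps power2_eq_square)
    also have "\<dots> = (h2 * k1)\<^sup>2 - d * k1\<^sup>2 * k2\<^sup>2"
      by (simp only: hk)
    also have "\<dots> = k1\<^sup>2 * n"
      by (simp flip: norms(2) add: algebra_simps power2_eq_square)
    finally have "k2\<^sup>2 * n = k1\<^sup>2 * n" .
    then have "k1 = k2"
      using \<open>n \<noteq> 0\<close> pos by simp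
    with hk pos \<open>(h1, k1) \<noteq> (h2, k2)\<close> show False
      by simp
  qed
  ultimately show ?thesis
    by blast
qed

text \<open>Dirichlet's approximation theorem yields infinitely many \<open>(h, k)\<close> of bounded nonzero norm;
  by pigeonhole two of them have the same norm \<open>n\<close> and are congruent modulo \<open>n\<close>.\<close>
lemma pell_solution_exists:
  fixes d :: int
  assumes "d > 0" "\<And>k. k\<^sup>2 \<noteq> d"
  shows "\<exists>x y. y \<noteq> 0 \<and> x\<^sup>2 - d * y\<^sup>2 = 1"
proof -
  define S where "S = approx_set (sqrt (of_int d))"
  define M where "M = \<lceil>1 + 2 * sqrt (of_int d)\<rceil>"
  define N where "N = (\<lambda>(h, k). h\<^sup>2 - d * k\<^sup>2)"
  define f where "f = (\<lambda>hk. (N hk, fst hk mod N hk, snd hk mod N hk))"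
  have "infinite S"
    using sqrt_of_int_not_rational[of d] assms rational_iff_finite_approx_set by (simp add: S_def)
  have k_pos: "snd hk > 0" if "hk \<in> S" for hk
    using that by (auto simp: S_def approx_set_def)
  have N_bound: "\<bar>N hk\<bar> \<le> M" if "hk \<in> S" for hk
    using that assms(1) norm_form_bound_of_good_approx[of d "snd hk" "fst hk"]
    by (auto simp: S_def approx_set_def M_def N_def)
  have N_nonzero: "N hk \<noteq> 0" if "hk \<in> S" for hk
  proof
    obtain h k where hk: "hk = (h, k)"
      by fastforce
    assume "N hk = 0"
    then have "(of_int h)\<^sup>2 = (of_int d * (of_int k)\<^sup>2 :: real)"
      by (simp add: N_def hk flip: of_int_power of_int_mult)
    then have "\<bar>of_int h\<bar> = sqrt (of_int d) * of_int k"
      using k_pos[OF that] by (metis abs_of_pos of_int_0_less_iff real_sqrt_abs real_sqrt_mult hk snd_conv)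
    then have "sqrt (of_int d) = of_int \<bar>h\<bar> / of_int k"
      using k_pos[OF that] by (simp add: hk field_simps)
    then show False
      using sqrt_of_int_not_rational[of d] assms by simp
  qed
  have "f hk \<in> {-M..M} \<times> {-M..M} \<times> {-M..M}" if "hk \<in> S" for hk
  proof -
    have "\<bar>fst hk mod N hk\<bar> \<le> M" "\<bar>snd hk mod N hk\<bar> \<le> M"
      using abs_mod_less[OF N_nonzero[OF that], of "fst hk"]
        abs_mod_less[OF N_nonzero[OF that], of "snd hk"] N_bound[OF that] by linarith+
    with N_bound[OF that] show ?thesis
      by (simp add: f_def abs_le_iff)
  qed
  then have "f ` S \<subseteq> {-M..M} \<times> {-M..M} \<times> {-M..M}"
    by blast
  then have "finite (f ` S)"
    by (rule finite_subset) simp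
  with \<open>infinite S\<close> have "\<not> inj_on f S"
    using finite_imageD by blast
  then obtain h1 k1 h2 k2 where in_S: "(h1, k1) \<in> S" "(h2, k2) \<in> S"
    and "(h1, k1) \<noteq> (h2, k2)" and f_eq: "f (h1, k1) = f (h2, k2)"
    unfolding inj_on_def by force
  define n where "n = N (h1, k1)"
  from f_eq have "N (h1, k1) = N (h2, k2) \<and> h1 mod N (h1, k1) = h2 mod N (h2, k2)
      \<and> k1 mod N (h1, k1) = k2 mod N (h2, k2)"
    unfolding f_def fst_conv snd_conv prod.inject .
  then have "N (h2, k2) = n" "h1 mod n = h2 mod n" "k1 mod n = k2 mod n"
    unfolding n_def by metis+
  then have "h1\<^sup>2 - d * k1\<^sup>2 = n" "h2\<^sup>2 - d * k2\<^sup>2 = n" "h1 mod n = h2 mod n" "k1 mod n = k2 mod n"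
    by (simp_all add: n_def N_def)
  moreover have "n \<noteq> 0" "k1 > 0" "k2 > 0"
    using N_nonzero k_pos in_S by (force simp: n_def)+
  ultimately show ?thesis
    using pell_solution_of_congruent_pair \<open>(h1, k1) \<noteq> (h2, k2)\<close> by blast
qed

lemma pell_unit_nontrivial:
  fixes a b d :: int
  assumes "d > 0" "a\<^sup>2 - d * b\<^sup>2 = 1" "b \<noteq> 0"
  shows "(of_int a, of_int b * csqrt (of_int d)) \<in> group_ring_C2_units d - trivial_units_C2 d"
proof -
  define s where "s = csqrt (of_int d)"
  have s2: "s\<^sup>2 = of_int d"
    by (simp add: s_def)
  have "a \<noteq> 0"
    using assms by (smt (verit) mult_nonneg_nonneg zero_le_power2 power_zero_numeral)
  moreover have "s \<noteq> 0"
    using assms(1) s2 by auto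
  ultimately have "(of_int a, of_int b * s) \<notin> trivial_units_C2 d"
    using assms(3) by (auto simp: trivial_units_C2_def)
  moreover have "c2_mult (of_int a, of_int b * s) (of_int a, of_int (- b) * s) = (1, 0)"
    using arg_cong[OF assms(2), of "of_int :: int \<Rightarrow> complex"]
    by (simp add: c2_mult_def s2 algebra_simps power2_eq_square flip: power2_eq_square)
  moreover have "(of_int a, of_int b * s) \<in> group_ring_C2 d" "(of_int a, of_int (- b) * s) \<in> group_ring_C2 d"
    using of_int_in_ring_of_integers[of a d] of_int_mult_csqrt_in_ring_of_integers[of b d]
      of_int_mult_csqrt_in_ring_of_integers[of "- b" d]
    by (simp_all add: group_ring_C2_def s_def)
  ultimately show ?thesis
    unfolding group_ring_C2_units_def s_def by blast
qed

lemma group_ring_C2_units_nontrivial: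
  assumes "d > 0" "\<And>k. k\<^sup>2 \<noteq> d"
  shows "group_ring_C2_units d \<noteq> trivial_units_C2 d"
  using pell_solution_exists[OF assms] pell_unit_nontrivial[OF assms(1)] by blast

lemma group_ring_C2_units_trivial_rat: "group_ring_C2_units 1 = trivial_units_C2 1"
proof -
  have "group_ring_C2_units 1 \<subseteq> trivial_units_C2 1"
    using ring_of_integers_1_subset_Ints
    by (intro group_ring_C2_units_subset_trivial[of 1 \<int>]) (auto elim!: Ints_cases)
  with trivial_units_C2_subset_units show ?thesis
    by blast
qed

lemma group_ring_C2_units_trivial_imag_quadratic:
  assumes "d < 0" "squarefree d"
  shows "group_ring_C2_units d = trivial_units_C2 d"
proof -
  have "group_ring_C2_units d \<subseteq> trivial_units_C2 d"
    using assms ring_of_integers_subset_quadratic_integers quadratic_integers_norm_sq_in_Ints[of d]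
    by (intro group_ring_C2_units_subset_trivial[of d "quadratic_integers d"])
       (simp_all add: quadratic_integers_add quadratic_integers_diff)
  with trivial_units_C2_subset_units show ?thesis
    by blast
qed

lemma squarefree_square_eq_1:
  fixes k :: int
  assumes "squarefree (k\<^sup>2)"
  shows "k\<^sup>2 = 1"
  using squarefreeD[OF assms, of k] by (simp add: abs_square_eq_1)

theorem mainTheorem6:
  fixes d :: int
  assumes "squarefree d"
  shows "group_ring_C2_units d = trivial_units_C2 d \<longleftrightarrow> (d = 1 \<or> d < 0)"
proof (cases "d = 1 \<or> d < 0")
  case True
  then show ?thesis
    using group_ring_C2_units_trivial_rat group_ring_C2_units_trivial_imag_quadratic[OF _ assms]
    by auto
next
  case False
  moreover have "d \<noteq> 0"
    using assms by auto
  moreover have "k\<^sup>2 \<noteq> d" for k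
    using False assms squarefree_square_eq_1[of k] by auto
  ultimately show ?thesis
    using group_ring_C2_units_nontrivial[of d] by auto
qed

end
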